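(* Let $s\ge1$, $h>0$, $q_0,p_0\in\mathbb{R}^m$, and suppose $u,v:[0,h]\to\mathbb{R}^m$ are polynomials of degree at most $s$ satisfying, for all $c\in[0,1]$, $$u(ch)=q_0+h\sum_{i=0}^{s-1}\Big(\int_0^cP_i(x)\,\mathrm{d}x\Big)\gamma_i(v),\qquad v(ch)=p_0+h\sum_{i=0}^{s-1}\Big(\int_0^cP_i(x)\,\mathrm{d}x\Big)\Big[-\eta_i(u)+\sum_{j=0}^{s-1}\rho_{ij}(u)\gamma_j(v)\Big].$$ Set $q_1=u(h)$, $p_1=v(h)$. Then $H(q_1,p_1)=H(q_0,p_0)$.
   Context: Let $U:\mathbb{R}^m\to\mathbb{R}$ be $C^1$ and $B:\mathbb{R}^m\to\mathbb{R}^{m\times m}$ continuous with $B(q)^\top=-B(q)$ for all $q$. This is a discretization of the problem $\dot q=p$, $\dot p=B(q)p-\nabla U(q)$, $q(0)=q_0$, $p(0)=p_0$ (for charged particle dynamics, $m=3$ and $B(q)p=p\times L(q)$ with $L$ the magnetic field and $-\nabla U$ the electric field), whose energy is $H(q,p)=\frac12p^\top p+U(q)$. $\{P_j\}_{j\ge0}$ is the orthonormal Legendre basis on $[0,1]$ ($\deg P_j=j$, $\int_0^1P_iP_j=\delta_{ij}$), and for a path $\sigma:[0,h]\to\mathbb{R}^m$: $\gamma_j(\sigma)=\int_0^1P_j(\tau)\sigma(\tau h)\mathrm{d}\tau$, $\eta_j(\sigma)=\int_0^1P_j(\tau)\nabla U(\sigma(\tau h))\mathrm{d}\tau$, $\rho_{ij}(\sigma)=\int_0^1P_i(\tau)P_j(\tau)B(\sigma(\tau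 h))\mathrm{d}\tau$. *)

theory Defs
  imports "HOL-Analysis.Analysis"
begin

text \<open>Orthonormal shifted Legendre polynomials on [0,1]:
  P_j(x) = sqrt(2j+1) * sum_{k=0}^j (-1)^(j+k) C(j,k) C(j+k,k) x^k.\<close>
definition legP :: "nat \<Rightarrow> real \<Rightarrow> real" where
  "legP j x = sqrt (2 * real j + 1) *
     (\<Sum>k\<le>j. (-1) ^ (j + k) * real (j choose k) * real ((j + k) choose k) * x ^ k)"

definition gammaL :: "real \<Rightarrow> nat \<Rightarrow> (real \<Rightarrow> real^'m) \<Rightarrow> real^'m" where
  "gammaL h j \<sigma> = integral {0..1} (\<lambda>\<tau>. legP j \<tau> *\<^sub>R \<sigma> (\<tau> * h))"

definition etaL :: "(real^'m \<Rightarrow> real^'m) \<Rightarrow> real \<Rightarrow> nat \<Rightarrow> (real \<Rightarrow> real^'m) \<Rightarrow> real^'m" where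
  "etaL gradU h j \<sigma> = integral {0..1} (\<lambda>\<tau>. legP j \<tau> *\<^sub>R gradU (\<sigma> (\<tau> * h)))"

definition rhoL :: "(real^'m \<Rightarrow> real^'m^'m) \<Rightarrow> real \<Rightarrow> nat \<Rightarrow> nat \<Rightarrow> (real \<Rightarrow> real^'m) \<Rightarrow> real^'m^'m" where
  "rhoL B h i j \<sigma> = integral {0..1} (\<lambda>\<tau>. (legP i \<tau> * legP j \<tau>) *\<^sub>R B (\<sigma> (\<tau> * h)))"

definition energy :: "(real^'m \<Rightarrow> real) \<Rightarrow> real^'m \<Rightarrow> real^'m \<Rightarrow> real" where
  "energy U q p = (1/2) * (p \<bullet> p) + U q"

definition poly_path_deg :: "real \<Rightarrow> nat \<Rightarrow> (real \<Rightarrow> real^'m) \<Rightarrow> bool" where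
  "poly_path_deg h s \<sigma> \<longleftrightarrow> (\<exists>c :: nat \<Rightarrow> real^'m. \<forall>t\<in>{0..h}. \<sigma> t = (\<Sum>k\<le>s. t ^ k *\<^sub>R c k))"

end

theory Submission
  imports Defs
begin

text \<open>Along the collocation paths the derivative of the energy is an L2 pairing of the
  velocity and the force with Legendre polynomials of degree below s, so by the fundamental
  theorem of calculus the energy increment equals h times the sum over i of
  \<open>\<gamma>\<^sub>i(v) \<bullet> \<dot>v\<^sub>i + \<eta>\<^sub>i(u) \<bullet> \<gamma>\<^sub>i(v)\<close>, where \<open>\<dot>v\<^sub>i\<close> is the i-th coefficient of the momentum
  equation. The potential terms cancel, and what remains is
  \<open>\<Sum>\<^sub>i\<^sub>j \<gamma>\<^sub>i(v) \<bullet> \<rho>\<^sub>i\<^sub>j(u) \<gamma>\<^sub>j(v)\<close>, the integral of the quadratic form of the skew matrix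
  \<open>B(u(ch))\<close> at \<open>\<Sum>\<^sub>i P\<^sub>i(c) \<gamma>\<^sub>i(v)\<close>, which vanishes pointwise.\<close>

lemma inner_matrix_vector_skew_eq_0:
  fixes M :: "real^'n^'n"
  assumes "transpose M = - M"
  shows "x \<bullet> (M *v x) = 0"
proof -
  have "x \<bullet> (M *v x) = (transpose M *v x) \<bullet> x"
    by (simp add: dot_lmul_matrix[symmetric])
  also have "\<dots> = - (x \<bullet> (M *v x))"
    using assms matrix_vector_mult_diff_rdistrib[of 0 M x] by (simp add: inner_commute)
  finally show ?thesis by simp
qed

lemma sum_sum_inner_matrix_vector_skew_eq_0:
  fixes M :: "real^'n^'n" and l :: "nat \<Rightarrow> real" and a :: "nat \<Rightarrow> real^'n"
  assumes "transpose M = - M"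
  shows "(\<Sum>i<s. \<Sum>j<s. (l i * l j) * (a i \<bullet> (M *v a j))) = 0"
proof -
  let ?x = "\<Sum>i<s. l i *\<^sub>R a i"
  have "M *v ?x = (\<Sum>j<s. l j *\<^sub>R (M *v a j))"
    by (induction s) (simp_all add: matrix_vector_right_distrib matrix_vector_mult_scaleR)
  then have "?x \<bullet> (M *v ?x) = (\<Sum>i<s. \<Sum>j<s. (l i * l j) * (a i \<bullet> (M *v a j)))"
    by (simp add: inner_sum_left inner_sum_right sum_distrib_left mult_ac)
      (subst sum.swap, simp add: mult_ac)
  with inner_matrix_vector_skew_eq_0[OF assms] show ?thesis by simp
qed

lemma bounded_linear_inner_matrix_vector:
  "bounded_linear (\<lambda>M::real^'n^'m. x \<bullet> (M *v y))"
proof -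
  have "linear (\<lambda>M::real^'n^'m. x \<bullet> (M *v y))"
    by (rule linearI)
      (simp_all add: matrix_vector_mult_add_rdistrib inner_add_right
        scaleR_matrix_vector_assoc[symmetric])
  then show ?thesis by (simp add: linear_conv_bounded_linear)
qed

lemma sum_sum_inner_weighted_skew_integral_eq_0:
  fixes M :: "real \<Rightarrow> real^'n^'n" and \<phi> :: "nat \<Rightarrow> real \<Rightarrow> real" and a :: "nat \<Rightarrow> real^'n"
  assumes skew: "\<And>c. c \<in> S \<Longrightarrow> transpose (M c) = - M c"
    and int: "\<And>i j. (\<lambda>c. (\<phi> i c * \<phi> j c) *\<^sub>R M c) integrable_on S"
  shows "(\<Sum>i<s. \<Sum>j<s. a i \<bullet> (integral S (\<lambda>c. (\<phi> i c * \<phi> j c) *\<^sub>R M c) *v a j)) = 0"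
proof -
  have "((\<lambda>c. \<Sum>i<s. \<Sum>j<s. (\<phi> i c * \<phi> j c) * (a i \<bullet> (M c *v a j))) has_integral
          (\<Sum>i<s. \<Sum>j<s. a i \<bullet> (integral S (\<lambda>c. (\<phi> i c * \<phi> j c) *\<^sub>R M c) *v a j))) S"
  proof (intro has_integral_sum finite_lessThan)
    fix i j
    show "((\<lambda>c. (\<phi> i c * \<phi> j c) * (a i \<bullet> (M c *v a j))) has_integral
            a i \<bullet> (integral S (\<lambda>c. (\<phi> i c * \<phi> j c) *\<^sub>R M c) *v a j)) S"
      using has_integral_linear[OF integrable_integral[OF int] bounded_linear_inner_matrix_vector]
      by (simp add: o_def scaleR_matrix_vector_assoc[symmetric])
  qed
  moreover have "((\<lambda>c. \<Sum>i<s. \<Sum>j<s. (\<phi> i c * \<phi> j c) * (a i \<bullet> (M c *v a j))) has_integral 0) S"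
    using sum_sum_inner_matrix_vector_skew_eq_0[OF skew]
    by (subst has_integral_cong[where g = "\<lambda>_. 0"]) auto
  ultimately show ?thesis by (rule has_integral_unique)
qed

lemma continuous_on_legP [continuous_intros]: "continuous_on A (legP i)"
  unfolding legP_def by (intro continuous_intros)

definition legendre_path :: "'a::real_normed_vector \<Rightarrow> real \<Rightarrow> nat \<Rightarrow> (nat \<Rightarrow> 'a) \<Rightarrow> real \<Rightarrow> 'a"
  where "legendre_path x0 h s a c = x0 + h *\<^sub>R (\<Sum>i<s. integral {0..c} (legP i) *\<^sub>R a i)"

lemma legendre_path_0 [simp]: "legendre_path x0 h s a 0 = x0"
  by (simp add: legendre_path_def)

lemma legendre_path_has_vector_derivative:
  assumes "c \<in> {0..1}"
  shows "(legendre_path x0 h s a has_vector_derivative h *\<^sub>R (\<Sum>i<s. legP i c *\<^sub>R a i))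
           (at c within {0..1})"
proof -
  have "((\<lambda>c. integral {0..c} (legP i)) has_real_derivative legP i c) (at c within {0..1})" for i
    using integral_has_vector_derivative[OF continuous_on_legP assms]
    by (simp add: has_real_derivative_iff_has_vector_derivative)
  from has_vector_derivative_scaleR[OF this has_vector_derivative_const]
  have "((\<lambda>c. \<Sum>i<s. integral {0..c} (legP i) *\<^sub>R a i) has_vector_derivative
               (\<Sum>i<s. legP i c *\<^sub>R a i)) (at c within {0..1})"
    by (intro has_vector_derivative_sum) simp
  then show ?thesis
    unfolding legendre_path_def
    using has_vector_derivative_add[OF has_vector_derivative_const
        has_vector_derivative_scaleR[OF DERIV_const]] by simp
qed

lemma continuous_on_legendre_path: "continuous_on {0..1} (legendre_path x0 h s a)"
  unfolding legendre_path_def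
  by (intro continuous_intros indefinite_integral_continuous_1 integrable_continuous_real
      continuous_on_legP)

lemma energy_has_vector_derivative:
  fixes U :: "real^'m \<Rightarrow> real"
  assumes U_grad: "\<And>q. (U has_derivative (\<lambda>w. gradU q \<bullet> w)) (at q)"
    and Q: "(Q has_vector_derivative Q') (at c within S)"
    and P: "(P has_vector_derivative P') (at c within S)"
  shows "((\<lambda>c. energy U (Q c) (P c)) has_vector_derivative P c \<bullet> P' + gradU (Q c) \<bullet> Q')
           (at c within S)"
proof -
  have "((\<lambda>c. energy U (Q c) (P c)) has_derivative
          (\<lambda>x. (1/2) * (P c \<bullet> (x *\<^sub>R P') + (x *\<^sub>R P') \<bullet> P c) + gradU (Q c) \<bullet> (x *\<^sub>R Q')))
          (at c within S)"
    using Q P unfolding energy_def has_vector_derivative_def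
    by (intro has_derivative_add has_derivative_mult_right has_derivative_inner
        has_derivative_compose[OF _ U_grad])
  moreover have "(\<lambda>x. (1/2) * (P c \<bullet> (x *\<^sub>R P') + (x *\<^sub>R P') \<bullet> P c) + gradU (Q c) \<bullet> (x *\<^sub>R Q'))
                 = (\<lambda>x. x *\<^sub>R (P c \<bullet> P' + gradU (Q c) \<bullet> Q'))"
    by (simp add: inner_commute[of P'] distrib_left)
  ultimately show ?thesis by (simp add: has_vector_derivative_def)
qed

lemma energy_legendre_path_increment:
  fixes U :: "real^'m \<Rightarrow> real" and q0 p0 :: "real^'m" and h :: real and s :: nat
    and a b :: "nat \<Rightarrow> real^'m"
  assumes U_grad: "\<And>q. (U has_derivative (\<lambda>w. gradU q \<bullet> w)) (at q)"
    and gradU_cont: "continuous_on UNIV gradU"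
  defines "Q \<equiv> legendre_path q0 h s a" and "P \<equiv> legendre_path p0 h s b"
  shows "energy U (Q 1) (P 1) - energy U q0 p0 =
           h * (\<Sum>i<s. integral {0..1} (\<lambda>c. legP i c *\<^sub>R P c) \<bullet> b i
                     + integral {0..1} (\<lambda>c. legP i c *\<^sub>R gradU (Q c)) \<bullet> a i)"
proof -
  define f' where "f' c = P c \<bullet> (h *\<^sub>R (\<Sum>i<s. legP i c *\<^sub>R b i))
                         + gradU (Q c) \<bullet> (h *\<^sub>R (\<Sum>i<s. legP i c *\<^sub>R a i))" for c
  have "(f' has_integral energy U (Q 1) (P 1) - energy U (Q 0) (P 0)) {0..1}"
    unfolding f'_def Q_def P_def
    by (intro fundamental_theorem_of_calculus energy_has_vector_derivative[OF U_grad]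
        legendre_path_has_vector_derivative) auto
  moreover have "f' = (\<lambda>c. h * (\<Sum>i<s. (legP i c *\<^sub>R P c) \<bullet> b i
                                + (legP i c *\<^sub>R gradU (Q c)) \<bullet> a i))"
    by (simp add: fun_eq_iff f'_def inner_sum_right sum.distrib distrib_left)
  moreover have "continuous_on {0..1} (\<lambda>c. gradU (Q c))"
    using continuous_on_compose2[OF gradU_cont continuous_on_legendre_path]
    unfolding Q_def by blast
  then have "((\<lambda>c. h * (\<Sum>i<s. (legP i c *\<^sub>R P c) \<bullet> b i + (legP i c *\<^sub>R gradU (Q c)) \<bullet> a i))
           has_integral h * (\<Sum>i<s. integral {0..1} (\<lambda>c. legP i c *\<^sub>R P c) \<bullet> b i
                     + integral {0..1} (\<lambda>c. legP i c *\<^sub>R gradU (Q c)) \<bullet> a i)) {0..1}"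
    unfolding P_def
    by (intro has_integral_mult_right has_integral_sum finite_lessThan has_integral_add
        has_integral_linear[OF integrable_integral bounded_linear_inner_left, unfolded o_def]
        integrable_continuous_real continuous_intros continuous_on_legendre_path)
  ultimately show ?thesis
    using has_integral_unique by (simp add: Q_def P_def)
qed

theorem theorem1:
  fixes U :: "real^'m \<Rightarrow> real"
    and gradU :: "real^'m \<Rightarrow> real^'m"
    and B :: "real^'m \<Rightarrow> real^'m^'m"
    and s :: nat and h :: real
    and q0 p0 :: "real^'m"
    and u v :: "real \<Rightarrow> real^'m"
  assumes U_grad: "\<And>q. (U has_derivative (\<lambda>w. gradU q \<bullet> w)) (at q)"
    and gradU_cont: "continuous_on UNIV gradU"
    and B_cont: "continuous_on UNIV B"
    and B_skew: "\<And>q. transpose (B q) = - B q"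
    and s_ge: "s \<ge> 1"
    and h_pos: "h > 0"
    and u_poly: "poly_path_deg h s u"
    and v_poly: "poly_path_deg h s v"
    and u_eq: "\<And>c. c \<in> {0..1} \<Longrightarrow>
       u (c * h) = q0 + h *\<^sub>R (\<Sum>i<s. integral {0..c} (legP i) *\<^sub>R gammaL h i v)"
    and v_eq: "\<And>c. c \<in> {0..1} \<Longrightarrow>
       v (c * h) = p0 + h *\<^sub>R (\<Sum>i<s. integral {0..c} (legP i) *\<^sub>R
          (- etaL gradU h i u + (\<Sum>j<s. rhoL B h i j u *v gammaL h j v)))"
  shows "energy U (u h) (v h) = energy U q0 p0"
proof -
  define g where "g i = gammaL h i v" for i
  define w where "w i = - etaL gradU h i u + (\<Sum>j<s. rhoL B h i j u *v g j)" for i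
  define Q where "Q = legendre_path q0 h s g"
  define P where "P = legendre_path p0 h s w"
  have uQ: "u (c * h) = Q c" and vP: "v (c * h) = P c" if "c \<in> {0..1}" for c
    using u_eq[OF that] v_eq[OF that] by (simp_all add: Q_def P_def legendre_path_def g_def w_def)
  have g_eq: "integral {0..1} (\<lambda>c. legP i c *\<^sub>R P c) = g i" for i
    unfolding g_def gammaL_def by (rule integral_cong) (simp add: vP)
  have eta_eq: "integral {0..1} (\<lambda>c. legP i c *\<^sub>R gradU (Q c)) = etaL gradU h i u" for i
    unfolding etaL_def by (rule integral_cong) (simp add: uQ)
  have rho_eq: "rhoL B h i j u = integral {0..1} (\<lambda>c. (legP i c * legP j c) *\<^sub>R B (Q c))" for i j
    unfolding rhoL_def by (rule integral_cong) (simp add: uQ)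
  have "continuous_on {0..1} (\<lambda>c. B (Q c))"
    using continuous_on_compose2[OF B_cont continuous_on_legendre_path] unfolding Q_def by blast
  then have skew_sum: "(\<Sum>i<s. \<Sum>j<s. g i \<bullet> (rhoL B h i j u *v g j)) = 0"
    unfolding rho_eq
    by (intro sum_sum_inner_weighted_skew_integral_eq_0 B_skew integrable_continuous_real
        continuous_intros)
  have "energy U (Q 1) (P 1) - energy U q0 p0
          = h * (\<Sum>i<s. g i \<bullet> w i + etaL gradU h i u \<bullet> g i)"
    using energy_legendre_path_increment[OF U_grad gradU_cont, of q0 h s g p0 w,
        folded Q_def P_def]
    by (simp add: g_eq eta_eq)
  also have "\<dots> = h * (\<Sum>i<s. \<Sum>j<s. g i \<bullet> (rhoL B h i j u *v g j))"
    by (simp add: w_def inner_commute inner_diff_right inner_sum_right)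
  finally show ?thesis
    using uQ[of 1] vP[of 1] skew_sum by simp
qed

end
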